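(* There is an absolute constant $C>0$ such that the following holds. Let $\alpha\in(0,1)$, $w(\alpha)=\sqrt{\alpha(1-\alpha)}$, let $a_1,\dots,a_N$ be i.i.d. $\mathsf{Ber}(\alpha)$ and $\widehat a_i=(a_i-\alpha)/w(\alpha)$. Let $k\ge1$ and suppose $N\ge16k^4/w(\alpha)^2$. For $\sigma\in S_k$ let $$f_\alpha(\sigma)=\Big|\sum_{\substack{\bm i\in[N]^k\\ \bm i\text{ compatible with }\sigma}}\mathbb{E}[\widehat a_{i_1}\cdots\widehat a_{i_k}]\Big|.$$ Then for every $\sigma\in S_k$, $$f_\alpha(\sigma)\le C\,k\,e^{k^{3/4}}\,w(\alpha)^{-\sum_{a=3}^k(a-2)|\mathsf{cyc}_a(\sigma)|}\,\big(|\mathsf{cyc}_1(\sigma)|\big)!!\,N^{|\mathsf{cyc}_1(\sigma)|/2+|\mathsf{cyc}_{\ge2}(\sigma)|}.$$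
   Context: $S_k$ is the symmetric group on $[k]=\{1,\dots,k\}$. For $\sigma\in S_k$ and $\bm i=(i_1,\dots,i_k)\in[N]^k$, $\sigma\bm i=(i_{\sigma(1)},\dots,i_{\sigma(k)})$, and $\bm i$ is compatible with $\sigma$ if $\sigma\bm i=\bm i$. $\mathsf{cyc}_a(\sigma)$ (resp. $\mathsf{cyc}_{\ge a}(\sigma)$) is the set of cycles of $\sigma$ of length exactly $a$ (resp. at least $a$), fixed points counting as cycles of length 1. $n!!=n(n-2)(n-4)\cdots$ (ending at 1 or 2), with $0!!=1$. $\mathsf{Ber}(\alpha)$ is the law of a $\{0,1\}$ variable equal to 1 with probability $\alpha$. *)

theory Defs
  imports "HOL-Probability.Probability" "HOL-Combinatorics.Orbits" "HOL-Combinatorics.Permutations"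
begin

fun dfact :: "nat \<Rightarrow> nat" where
  "dfact 0 = 1"
| "dfact (Suc 0) = 1"
| "dfact (Suc (Suc n)) = Suc (Suc n) * dfact n"

definition cyc_count :: "nat \<Rightarrow> (nat \<Rightarrow> nat) \<Rightarrow> nat \<Rightarrow> nat" where
  "cyc_count k \<sigma> a = card {orbit \<sigma> x | x. x < k \<and> card (orbit \<sigma> x) = a}"

definition cyc_count_ge :: "nat \<Rightarrow> (nat \<Rightarrow> nat) \<Rightarrow> nat \<Rightarrow> nat" where
  "cyc_count_ge k \<sigma> a = card {orbit \<sigma> x | x. x < k \<and> card (orbit \<sigma> x) \<ge> a}"

definition wB :: "real \<Rightarrow> real" where
  "wB \<alpha> = sqrt (\<alpha> * (1 - \<alpha>))"

text \<open>Joint law of a_0,...,a_{N-1} i.i.d. Ber(alpha) (True = 1).\<close>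
definition ber_vec :: "nat \<Rightarrow> real \<Rightarrow> (nat \<Rightarrow> bool) pmf" where
  "ber_vec N \<alpha> = Pi_pmf {..<N} False (\<lambda>_. bernoulli_pmf \<alpha>)"

definition ahat :: "real \<Rightarrow> (nat \<Rightarrow> bool) \<Rightarrow> nat \<Rightarrow> real" where
  "ahat \<alpha> a i = (of_bool (a i) - \<alpha>) / wB \<alpha>"

text \<open>f_alpha(sigma): index tuples i in [N]^k are functions {0..<k} -> {0..<N};
  sigma acts by (sigma i)_j = i_(sigma j); compatible means sigma i = i.\<close>
definition f_alpha :: "nat \<Rightarrow> nat \<Rightarrow> real \<Rightarrow> (nat \<Rightarrow> nat) \<Rightarrow> real" where
  "f_alpha N k \<alpha> \<sigma> = \<bar>\<Sum>i \<in> {i \<in> {..<k} \<rightarrow>\<^sub>E {..<N}. \<forall>j<k. i (\<sigma> j) = i j}.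
      measure_pmf.expectation (ber_vec N \<alpha>) (\<lambda>a. \<Prod>j<k. ahat \<alpha> a (i j))\<bar>"

end

theory Submission
  imports Defs
begin

text \<open>
  An index tuple compatible with \<open>\<sigma>\<close> is constant on the cycles of \<open>\<sigma>\<close>, i.e. it is a colouring
  of the cycles with \<open>N\<close> colours, and by independence its expectation factorises into the product
  over the colours \<open>u\<close> of \<open>m(n\<^sub>u)\<close>, where \<open>n\<^sub>u\<close> is the total length of the cycles of colour \<open>u\<close>
  and \<open>m(n)\<close> is the \<open>n\<close>-th moment of \<open>ahat\<close>. Since \<open>m(0) = 1\<close>, \<open>m(1) = 0\<close> and
  \<open>|m(n)| \<le> w\<^sup>2 / w\<^sup>n\<close>, the sum over colourings is bounded by induction on the set of cycles.
  Removing a cycle \<open>c\<^sub>0\<close> and summing over the set \<open>A\<close> of cycles sharing its colour costs a factor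
  \<open>N |m(\<ell>(c\<^sub>0) + \<ell>(A))|\<close>. A fixed point cannot be alone in its colour class; its dominant partner
  is a single other fixed point, which produces the recursion \<open>(p+1)!! = (p+1) (p-1)!!\<close>, and
  every other choice of \<open>A\<close> is smaller by a factor \<open>\<epsilon> = 1/(w \<surd>N) \<le> 1/(4k\<^sup>2)\<close>. Every cycle
  costs at most a further \<open>(1+\<epsilon>\<^sup>2)\<^sup>k\<close>, and these factors multiply to at most 2, so the theorem
  holds with \<open>C = 2\<close>.
\<close>

section \<open>Double factorials and elementary estimates\<close>

lemma dfact_le_dfact_Suc: "dfact n \<le> dfact (Suc n)"
proof (induction n rule: dfact.induct)
  case (3 n)
  then show ?case
    using mult_le_mono[of "Suc (Suc n)" "Suc (Suc (Suc n))" "dfact n" "dfact (Suc n)"] by simp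
qed simp_all

lemma dfact_mono: "m \<le> n \<Longrightarrow> dfact m \<le> dfact n"
  by (rule lift_Suc_mono_le[of dfact]) (auto intro: dfact_le_dfact_Suc)

lemma dfact_Suc_le: "dfact (Suc n) \<le> Suc n * dfact n"
proof (cases n)
  case (Suc j)
  then show ?thesis using mult_le_mono2[OF dfact_le_dfact_Suc[of j], of "Suc (Suc j)"] by simp
qed simp

lemma one_plus_power_le:
  fixes x :: real
  assumes "0 \<le> x" "real n * x \<le> 1"
  shows "(1 + x) ^ n \<le> 1 + real n * x + (real n * x)\<^sup>2"
  using assms(2)
proof (induction n)
  case (Suc n)
  have nx: "real n * x \<le> 1" using Suc.prems assms(1) by (simp add: algebra_simps)
  have "(1 + x) ^ Suc n \<le> (1 + real n * x + (real n * x)\<^sup>2) * (1 + x)"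
    using Suc.IH[OF nx] assms(1) by (simp add: mult_right_mono mult.commute)
  also have "\<dots> \<le> 1 + real (Suc n) * x + (real (Suc n) * x)\<^sup>2"
    using mult_right_mono[OF nx, of "real n * x * x"] assms(1)
    by (simp add: algebra_simps power2_eq_square, intro add_increasing) simp_all
  finally show ?case .
qed simp

lemma sum_Pow_power_sum:
  fixes x :: "'a :: comm_semiring_1"
  assumes "finite X"
  shows "(\<Sum>A\<in>Pow X. x ^ (\<Sum>c\<in>A. w c)) = (\<Prod>c\<in>X. 1 + x ^ w c)"
  using prod_add[OF assms, of "\<lambda>c. x ^ w c" "\<lambda>_. 1"] by (simp add: power_sum add.commute)

section \<open>Colouring sums\<close>

definition load :: "('c \<Rightarrow> nat) \<Rightarrow> 'c set \<Rightarrow> ('c \<Rightarrow> nat) \<Rightarrow> nat \<Rightarrow> nat" where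
  "load l S g u = sum l {c\<in>S. g c = u}"

text \<open>For the cycles of \<open>\<sigma>\<close> as items, \<open>l = card\<close> and \<open>h n = |ber_moment \<alpha> n|\<close> this dominates
  \<open>f_alpha\<close>: a compatible tuple is a colouring of the cycles.\<close>

definition colour_sum :: "(nat \<Rightarrow> real) \<Rightarrow> nat \<Rightarrow> ('c \<Rightarrow> nat) \<Rightarrow> 'c set \<Rightarrow> real" where
  "colour_sum h N l S = (\<Sum>g\<in>S \<rightarrow>\<^sub>E {..<N}. \<Prod>u<N. h (load l S g u))"

lemma colour_sum_nonneg: "(\<And>n. 0 \<le> h n) \<Longrightarrow> 0 \<le> colour_sum h N l S"
  unfolding colour_sum_def by (intro sum_nonneg prod_nonneg) auto

lemma colour_sum_empty: "h 0 = 1 \<Longrightarrow> colour_sum h N l {} = 1"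
  unfolding colour_sum_def load_def by simp

lemma colour_sum_fibre_le:
  assumes fin: "finite R" and A: "A \<subseteq> R" and u0: "u0 < N" and h0: "h 0 = 1" and hnn: "\<And>n. 0 \<le> h n"
  shows "(\<Sum>g\<in>{g \<in> R \<rightarrow>\<^sub>E {..<N}. {c\<in>R. g c = u0} = A}. \<Prod>u\<in>{..<N}-{u0}. h (load l R g u))
         \<le> colour_sum h N l (R - A)"
proof -
  let ?F = "{g \<in> R \<rightarrow>\<^sub>E {..<N}. {c\<in>R. g c = u0} = A}"
  let ?Q = "\<lambda>g'. \<Prod>u<N. h (load l (R - A) g' u)"
  have restrict_eq: "(\<Prod>u\<in>{..<N}-{u0}. h (load l R g u)) = ?Q (restrict g (R - A))" if g: "g \<in> ?F" for g
  proof -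
    have "load l (R - A) (restrict g (R - A)) u = load l R g u" if "u \<noteq> u0" for u
      unfolding load_def using g that by (intro arg_cong[where f="sum l"]) auto
    moreover have "load l (R - A) (restrict g (R - A)) u0 = 0"
      unfolding load_def using g by (auto intro: sum.neutral)
    ultimately show ?thesis
      using u0 h0 by (auto simp: prod.remove[of "{..<N}" u0] intro!: prod.cong)
  qed
  have "inj_on (\<lambda>g. restrict g (R - A)) ?F"
  proof (rule inj_onI, rule ext)
    fix g1 g2 c assume g: "g1 \<in> ?F" "g2 \<in> ?F" and eq: "restrict g1 (R - A) = restrict g2 (R - A)"
    consider "c \<in> A" | "c \<in> R - A" | "c \<notin> R" using A by blast
    then show "g1 c = g2 c"
    proof cases
      case 1
      then have "g1 c = u0" "g2 c = u0" using g by (simp_all add: set_eq_iff) blast+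
      then show ?thesis by simp
    next
      case 2
      then show ?thesis using fun_cong[OF eq, of c] by simp
    qed (use g in \<open>auto simp: PiE_def extensional_def\<close>)
  qed
  have "(\<Sum>g\<in>?F. \<Prod>u\<in>{..<N}-{u0}. h (load l R g u)) = (\<Sum>g\<in>?F. ?Q (restrict g (R - A)))"
    using restrict_eq by (rule sum.cong[OF refl])
  also have "\<dots> = (\<Sum>g'\<in>(\<lambda>g. restrict g (R - A)) ` ?F. ?Q g')"
    using \<open>inj_on _ ?F\<close> by (simp add: sum.reindex)
  also have "\<dots> \<le> (\<Sum>g'\<in>(R - A) \<rightarrow>\<^sub>E {..<N}. ?Q g')"
    using fin by (intro sum_mono2 finite_PiE prod_nonneg hnn) (auto simp: PiE_def Pi_def)
  finally show ?thesis
    unfolding colour_sum_def .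
qed

text \<open>\<open>A\<close> is the set of the other items that get the colour of \<open>c0\<close>.\<close>

lemma colour_sum_insert_le:
  assumes fin: "finite R" and c0: "c0 \<notin> R" and h0: "h 0 = 1" and hnn: "\<And>n. 0 \<le> h n"
  shows "colour_sum h N l (insert c0 R)
           \<le> real N * (\<Sum>A\<in>Pow R. h (l c0 + sum l A) * colour_sum h N l (R - A))"
proof -
  let ?P = "\<lambda>g u0. \<Prod>u\<in>{..<N}-{u0}. h (load l R g u)"
  have load_upd: "load l (insert c0 R) (g(c0 := u0)) u = (if u = u0 then l c0 else 0) + load l R g u"
    for g u0 u
  proof -
    have "{c \<in> insert c0 R. (g(c0 := u0)) c = u} =
          (if u = u0 then insert c0 {c\<in>R. g c = u} else {c\<in>R. g c = u})"
      using c0 by auto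
    then show ?thesis unfolding load_def using fin c0 by auto
  qed
  have prod_upd: "(\<Prod>u<N. h (load l (insert c0 R) (g(c0 := u0)) u)) = h (l c0 + load l R g u0) * ?P g u0"
    if "u0 < N" for g u0
    using that by (auto simp: prod.remove[of "{..<N}" u0] load_upd intro!: prod.cong)
  have "colour_sum h N l (insert c0 R)
      = (\<Sum>u0<N. \<Sum>g\<in>R \<rightarrow>\<^sub>E {..<N}. \<Prod>u<N. h (load l (insert c0 R) (g(c0 := u0)) u))"
    unfolding colour_sum_def PiE_insert_eq
    by (subst sum.reindex) (use inj_combinator[OF c0, of "\<lambda>_. {..<N}"] in
        \<open>auto simp: comp_def sum.cartesian_product case_prod_unfold\<close>)
  also have "\<dots> = (\<Sum>u0<N. \<Sum>g\<in>R \<rightarrow>\<^sub>E {..<N}. h (l c0 + load l R g u0) * ?P g u0)"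
    using prod_upd by (intro sum.cong) auto
  also have "\<dots> \<le> (\<Sum>u0<N. \<Sum>A\<in>Pow R. h (l c0 + sum l A) * colour_sum h N l (R - A))"
  proof (intro sum_mono)
    fix u0 assume u0: "u0 \<in> {..<N}"
    have "(\<Sum>g\<in>R \<rightarrow>\<^sub>E {..<N}. h (l c0 + load l R g u0) * ?P g u0) =
      (\<Sum>A\<in>Pow R. \<Sum>g\<in>{g \<in> R \<rightarrow>\<^sub>E {..<N}. {c\<in>R. g c = u0} = A}. h (l c0 + load l R g u0) * ?P g u0)"
      using fin by (intro sum.group[symmetric]) (auto intro: finite_PiE)
    also have "\<dots> = (\<Sum>A\<in>Pow R. h (l c0 + sum l A) *
                       (\<Sum>g\<in>{g \<in> R \<rightarrow>\<^sub>E {..<N}. {c\<in>R. g c = u0} = A}. ?P g u0))"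
      by (intro sum.cong refl) (auto simp: sum_distrib_left load_def intro!: sum.cong)
    also have "\<dots> \<le> (\<Sum>A\<in>Pow R. h (l c0 + sum l A) * colour_sum h N l (R - A))"
      using u0 by (intro sum_mono mult_left_mono colour_sum_fibre_le fin h0 hnn) auto
    finally show "(\<Sum>g\<in>R \<rightarrow>\<^sub>E {..<N}. h (l c0 + load l R g u0) * ?P g u0) \<le> \<dots>" .
  qed
  finally show ?thesis by simp
qed

section \<open>Bounding colouring sums\<close>

lemma mult_le_quarter_if_le:
  fixes \<epsilon> :: real
  assumes "0 < \<epsilon>" "4 * real k ^ 2 * \<epsilon> \<le> 1" "a \<le> k" "b \<le> k"
  shows "real a * real b * \<epsilon> \<le> 1/4"
proof -
  have "real a * real b \<le> real k ^ 2"
    using assms(3,4) by (simp add: power2_eq_square mult_mono)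
  then show ?thesis using assms(1,2) mult_right_mono[of "real a * real b" "real k ^ 2" \<epsilon>] by linarith
qed

lemma power_one_plus_sq_minus_one_le:
  fixes \<epsilon> :: real
  assumes "0 < \<epsilon>" "\<epsilon> \<le> 1/4" "real m * \<epsilon> \<le> 1/4"
  shows "(1 + \<epsilon>\<^sup>2) ^ m - 1 \<le> 2 * (real m * \<epsilon>) * \<epsilon>"
proof -
  have small: "real m * \<epsilon>\<^sup>2 \<le> 1/16"
    using mult_mono[OF assms(3,2)] assms(1) by (simp add: power2_eq_square mult.assoc)
  then have "(real m * \<epsilon>\<^sup>2)\<^sup>2 \<le> real m * \<epsilon>\<^sup>2"
    using mult_left_le[of "real m * \<epsilon>\<^sup>2" "real m * \<epsilon>\<^sup>2"] by (simp add: power2_eq_square)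
  then show ?thesis
    using one_plus_power_le[of "\<epsilon>\<^sup>2" m] small by (simp add: power2_eq_square)
qed

lemma power_one_plus_minus_one_le:
  fixes \<epsilon> :: real
  assumes "0 < \<epsilon>" "real p * \<epsilon> \<le> 1/4" "real p * real p * \<epsilon> \<le> 1/4"
  shows "(1 + \<epsilon>) ^ p - 1 \<le> (real p + 1/4) * \<epsilon>"
proof -
  have "(real p * \<epsilon>)\<^sup>2 \<le> \<epsilon> / 4"
    using mult_right_mono[OF assms(3), of \<epsilon>] assms(1) by (simp add: power2_eq_square mult_ac)
  then show ?thesis
    using one_plus_power_le[of \<epsilon> p] assms by (simp add: algebra_simps)
qed

lemma perturbation_terms_le:
  fixes \<epsilon> X Y :: real
  assumes eps: "0 < \<epsilon>" and e: "\<epsilon> \<le> 1/4" and me: "real m * \<epsilon> \<le> 1/4" and pme: "real p * real m * \<epsilon> \<le> 1/4"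
    and X: "0 \<le> X" "X \<le> 2 * (real m * \<epsilon>) * \<epsilon>" and Y: "0 \<le> Y" "Y \<le> (real p + 1/4) * \<epsilon>"
  shows "real p * X + Y * (1 + X) \<le> (real p + 1) * \<epsilon>"
proof -
  have "real p * X \<le> 2 * (real p * real m * \<epsilon>) * \<epsilon>"
    using mult_left_mono[OF X(2), of "real p"] by (simp add: mult_ac)
  also have "\<dots> \<le> 2 * (1/4) * \<epsilon>"
    using pme eps by (intro mult_right_mono) auto
  finally have pX: "real p * X \<le> \<epsilon> / 2" by simp
  have "Y * X \<le> (real p + 1/4) * \<epsilon> * (2 * (real m * \<epsilon>) * \<epsilon>)"
    using X Y by (intro mult_mono) auto
  also have "\<dots> = (2 * (real p * real m * \<epsilon>) * \<epsilon> + real m * \<epsilon> * \<epsilon> / 2) * \<epsilon>"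
    by (simp add: algebra_simps)
  also have "\<dots> \<le> (2 * (1/4) * (1/4) + (1/4) * (1/4) / 2) * \<epsilon>"
    using pme me e eps by (intro mult_right_mono add_mono mult_mono divide_right_mono) auto
  finally have "Y * X \<le> \<epsilon> / 4" using eps by simp
  then show ?thesis
    using pX Y by (simp add: algebra_simps)
qed

text \<open>For \<open>A\<close> a single fixed point the recursion step contributes \<open>p (p-1)!! \<epsilon>\<close>; all other
  contributions are of order \<open>\<epsilon>\<^sup>2\<close> and fit into the remaining \<open>(p-1)!! \<epsilon>\<close>.\<close>

lemma dfact_perturbation_le:
  fixes \<epsilon> :: real
  assumes eps: "0 < \<epsilon>" "4 * real k ^ 2 * \<epsilon> \<le> 1" and k: "1 \<le> k" and "p \<le> k" "m \<le> k"
  shows "real (dfact p) * ((1 + \<epsilon>\<^sup>2) ^ m - 1) + real (dfact (p - 1)) * ((1 + \<epsilon>) ^ p - 1) * (1 + \<epsilon>\<^sup>2) ^ m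
         \<le> \<epsilon> * real (dfact (Suc p))"
proof -
  have pe: "real p * \<epsilon> \<le> 1/4" and me: "real m * \<epsilon> \<le> 1/4" and e: "\<epsilon> \<le> 1/4"
    and pme: "real p * real m * \<epsilon> \<le> 1/4" and ppe: "real p * real p * \<epsilon> \<le> 1/4"
    using mult_le_quarter_if_le[OF eps] assms(3-5) by (metis mult_1 of_nat_1)+
  define X where "X = (1 + \<epsilon>\<^sup>2) ^ m - 1"
  define Y where "Y = (1 + \<epsilon>) ^ p - 1"
  have X: "0 \<le> X" "X \<le> 2 * (real m * \<epsilon>) * \<epsilon>"
    unfolding X_def using power_one_plus_sq_minus_one_le[OF eps(1) e me] by simp_all
  have Y: "0 \<le> Y" "Y \<le> (real p + 1/4) * \<epsilon>"
    unfolding Y_def using power_one_plus_minus_one_le[OF eps(1) pe ppe] eps(1) by simp_all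
  show ?thesis
  proof (cases p)
    case 0
    have "X \<le> \<epsilon>" using X(2) mult_right_mono[OF me, of \<epsilon>] eps by linarith
    then show ?thesis using 0 unfolding X_def by simp
  next
    case (Suc q)
    have dp: "real (dfact p) \<le> real p * real (dfact q)"
      using dfact_Suc_le[of q] Suc by (metis of_nat_le_iff of_nat_mult)
    have key: "real p * X + Y * (1 + X) \<le> (real p + 1) * \<epsilon>"
      using perturbation_terms_le[OF eps(1) e me pme X Y] .
    have "real (dfact p) * X + real (dfact q) * Y * (1 + X) \<le> real (dfact q) * (real p * X + Y * (1 + X))"
      using mult_right_mono[OF dp X(1)] by (simp add: algebra_simps)
    also have "\<dots> \<le> real (dfact q) * ((real p + 1) * \<epsilon>)"
      using key by (intro mult_left_mono) auto
    also have "\<dots> = \<epsilon> * real (dfact (Suc p))"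
      using Suc by (simp add: algebra_simps)
    finally show ?thesis unfolding X_def Y_def using Suc by simp
  qed
qed

lemma sum_min_two_plus_excess:
  fixes l :: "'c \<Rightarrow> nat"
  shows "(\<Sum>c\<in>A. min (l c) 2) + (\<Sum>c\<in>A. l c - 2) = sum l A"
  by (auto simp: sum.distrib[symmetric] intro!: sum.cong)

lemma sum_Pow_power_weight:
  fixes x :: "'a :: comm_semiring_1"
  assumes fin: "finite R" and pos: "\<forall>c\<in>R. 1 \<le> l c"
  shows "(\<Sum>A\<in>Pow R. x ^ (\<Sum>c\<in>A. min (l c) 2))
         = (1 + x) ^ card {c\<in>R. l c = 1} * (1 + x\<^sup>2) ^ card {c\<in>R. 2 \<le> l c}"
proof -
  have R: "R = {c\<in>R. l c = 1} \<union> {c\<in>R. 2 \<le> l c}" using pos by force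
  have "(\<Sum>A\<in>Pow R. x ^ (\<Sum>c\<in>A. min (l c) 2)) = (\<Prod>c\<in>R. 1 + x ^ min (l c) 2)"
    using fin by (rule sum_Pow_power_sum)
  also have "\<dots> = (\<Prod>c\<in>{c\<in>R. l c = 1}. 1 + x ^ min (l c) 2) * (\<Prod>c\<in>{c\<in>R. 2 \<le> l c}. 1 + x ^ min (l c) 2)"
    using fin by (subst R, intro prod.union_disjoint) auto
  also have "\<dots> = (\<Prod>c\<in>{c\<in>R. l c = 1}. 1 + x) * (\<Prod>c\<in>{c\<in>R. 2 \<le> l c}. 1 + x\<^sup>2)"
    by (intro arg_cong2[where f="(*)"] prod.cong) (auto simp: min_absorb2)
  finally show ?thesis by simp
qed

lemma sum_Pow_power_weight_large:
  fixes x :: "'a :: comm_semiring_1"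
  assumes "finite R"
  shows "(\<Sum>A\<in>Pow {c\<in>R. 2 \<le> l c}. x ^ (\<Sum>c\<in>A. min (l c) 2)) = (1 + x\<^sup>2) ^ card {c\<in>R. 2 \<le> l c}"
  using sum_Pow_power_weight[of "{c\<in>R. 2 \<le> l c}" l x] assms by (simp cong: conj_cong)

lemma sum_Pow_weight_dfact_avoiding:
  fixes x :: real
  assumes "finite R"
  shows "(\<Sum>A\<in>Pow {c\<in>R. 2 \<le> l c} - {{}}. x ^ (\<Sum>c\<in>A. min (l c) 2) * real (dfact (card {c\<in>R - A. l c = 1})))
         = real (dfact (card {c\<in>R. l c = 1})) * ((1 + x\<^sup>2) ^ card {c\<in>R. 2 \<le> l c} - 1)"
proof -
  have "{c\<in>R - A. l c = 1} = {c\<in>R. l c = 1}" if "A \<subseteq> {c\<in>R. 2 \<le> l c}" for A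
    using that by auto
  then have "(\<Sum>A\<in>Pow {c\<in>R. 2 \<le> l c} - {{}}. x ^ (\<Sum>c\<in>A. min (l c) 2) * real (dfact (card {c\<in>R - A. l c = 1})))
      = real (dfact (card {c\<in>R. l c = 1})) * (\<Sum>A\<in>Pow {c\<in>R. 2 \<le> l c} - {{}}. x ^ (\<Sum>c\<in>A. min (l c) 2))"
    by (simp add: sum_distrib_left mult.commute)
  then show ?thesis
    using assms sum_Pow_power_weight_large[OF assms, of x l] by (simp add: sum_diff1)
qed

lemma sum_Pow_weight_dfact_meeting_le:
  fixes \<epsilon> :: real
  assumes fin: "finite R" and pos: "\<forall>c\<in>R. 1 \<le> l c" and eps: "0 < \<epsilon>"
  defines "F \<equiv> {c\<in>R. l c = 1}" and "G \<equiv> {c\<in>R. 2 \<le> l c}"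
  shows "(\<Sum>A\<in>{A\<in>Pow R. A \<inter> F \<noteq> {}}. \<epsilon> ^ (\<Sum>c\<in>A. min (l c) 2) * real (dfact (card {c\<in>R - A. l c = 1})))
         \<le> real (dfact (card F - 1)) * ((1 + \<epsilon>) ^ card F - 1) * (1 + \<epsilon>\<^sup>2) ^ card G"
proof -
  let ?W = "\<lambda>A. \<epsilon> ^ (\<Sum>c\<in>A. min (l c) 2)"
  define Q where "Q = {A\<in>Pow R. A \<inter> F \<noteq> {}}"
  have "c \<in> G" if "c \<in> R" "c \<notin> F" for c
    using that pos unfolding F_def G_def by (auto simp: Suc_le_eq)
  then have PowR: "Pow R = Pow G \<union> Q" "Pow G \<inter> Q = {}"
    unfolding Q_def F_def G_def by auto
  have "dfact (card {c\<in>R - A. l c = 1}) \<le> dfact (card F - 1)" if "A \<in> Q" for A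
  proof -
    have "{c\<in>R - A. l c = 1} = F - A" unfolding F_def by blast
    moreover have "card (F - A) < card F"
      using that fin unfolding Q_def F_def by (intro psubset_card_mono) auto
    ultimately show ?thesis by (simp add: dfact_mono)
  qed
  then have "(\<Sum>A\<in>Q. ?W A * real (dfact (card {c\<in>R - A. l c = 1}))) \<le> (\<Sum>A\<in>Q. ?W A * real (dfact (card F - 1)))"
    using eps by (intro sum_mono mult_left_mono) auto
  also have "\<dots> = real (dfact (card F - 1)) * (\<Sum>A\<in>Q. ?W A)"
    by (simp add: sum_distrib_left mult.commute)
  also have "(\<Sum>A\<in>Q. ?W A) = (1 + \<epsilon>) ^ card F * (1 + \<epsilon>\<^sup>2) ^ card G - (1 + \<epsilon>\<^sup>2) ^ card G"
  proof -
    have "(\<Sum>A\<in>Pow R. ?W A) = (\<Sum>A\<in>Pow G. ?W A) + (\<Sum>A\<in>Q. ?W A)"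
      unfolding PowR(1) using fin PowR(2) by (intro sum.union_disjoint) (auto simp: Q_def G_def)
    moreover have "(\<Sum>A\<in>Pow R. ?W A) = (1 + \<epsilon>) ^ card F * (1 + \<epsilon>\<^sup>2) ^ card G"
      unfolding F_def G_def by (rule sum_Pow_power_weight[OF fin pos])
    moreover have "(\<Sum>A\<in>Pow G. ?W A) = (1 + \<epsilon>\<^sup>2) ^ card G"
      unfolding G_def by (rule sum_Pow_power_weight_large[OF fin])
    ultimately show ?thesis by simp
  qed
  finally show ?thesis unfolding Q_def by (simp add: algebra_simps)
qed

lemma sum_Pow_weight_dfact_le:
  fixes \<epsilon> :: real
  assumes fin: "finite R" and pos: "\<forall>c\<in>R. 1 \<le> l c" and card: "card R \<le> k"
    and eps: "0 < \<epsilon>" "4 * real k ^ 2 * \<epsilon> \<le> 1" and k: "1 \<le> k"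
  shows "(\<Sum>A\<in>Pow R - {{}}. \<epsilon> ^ (\<Sum>c\<in>A. min (l c) 2) * real (dfact (card {c\<in>R - A. l c = 1})))
         \<le> \<epsilon> * real (dfact (Suc (card {c\<in>R. l c = 1})))"
proof -
  define F where "F = {c\<in>R. l c = 1}"
  define G where "G = {c\<in>R. 2 \<le> l c}"
  define Q where "Q = {A\<in>Pow R. A \<inter> F \<noteq> {}}"
  have "card F \<le> card R" "card G \<le> card R"
    unfolding F_def G_def using fin by (auto intro: card_mono)
  then have FG: "card F \<le> k" "card G \<le> k" using card by auto
  have "c \<in> G" if "c \<in> R" "c \<notin> F" for c
    using that pos unfolding F_def G_def by (auto simp: Suc_le_eq)
  then have "Pow R - {{}} = (Pow G - {{}}) \<union> Q" "(Pow G - {{}}) \<inter> Q = {}"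
    unfolding Q_def F_def G_def by auto
  then have "(\<Sum>A\<in>Pow R - {{}}. \<epsilon> ^ (\<Sum>c\<in>A. min (l c) 2) * real (dfact (card {c\<in>R - A. l c = 1})))
      \<le> real (dfact (card F)) * ((1 + \<epsilon>\<^sup>2) ^ card G - 1)
        + real (dfact (card F - 1)) * ((1 + \<epsilon>) ^ card F - 1) * (1 + \<epsilon>\<^sup>2) ^ card G"
    using fin sum_Pow_weight_dfact_avoiding[OF fin, of \<epsilon> l] sum_Pow_weight_dfact_meeting_le[OF fin pos eps(1)]
    unfolding F_def G_def Q_def by (simp add: sum.union_disjoint)
  also have "\<dots> \<le> \<epsilon> * real (dfact (Suc (card F)))"
    using dfact_perturbation_le[OF eps k FG] .
  finally show ?thesis unfolding F_def .
qed

text \<open>Applied with \<open>h n = |ber_moment \<alpha> n|\<close>, \<open>s = \<surd>N\<close> and \<open>\<epsilon> = 1/(w\<surd>N)\<close>, so that \<open>\<epsilon> s = 1/w\<close>.\<close>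

locale moment_bound =
  fixes h :: "nat \<Rightarrow> real" and N k :: nat and \<epsilon> s :: real
  assumes h_0: "h 0 = 1" and h_1: "h 1 = 0" and h_nonneg: "\<And>n. 0 \<le> h n"
    and h_le: "\<And>n. 2 \<le> n \<Longrightarrow> h n \<le> (\<epsilon> * s) ^ (n - 2)"
    and s_pos: "0 < s" and N_eq: "real N = s\<^sup>2"
    and eps_pos: "0 < \<epsilon>" and eps_small: "4 * real k ^ 2 * \<epsilon> \<le> 1" and k_pos: "1 \<le> k"
begin

definition rho :: real where
  "rho = (1 + \<epsilon>\<^sup>2) ^ k"

definition colour_bound :: "('c \<Rightarrow> nat) \<Rightarrow> 'c set \<Rightarrow> real" where
  "colour_bound l S = real (dfact (card {c\<in>S. l c = 1})) * rho ^ card S * \<epsilon> ^ (\<Sum>c\<in>S. l c - 2) * s ^ sum l S"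

lemma rho_ge_one: "1 \<le> rho"
  unfolding rho_def by simp

lemma rho_power_le_two:
  assumes "m \<le> k"
  shows "rho ^ m \<le> 2"
proof -
  have "1 \<le> real k ^ 2" using k_pos by simp
  then have "\<epsilon> \<le> real k ^ 2 * \<epsilon>" using mult_right_mono[of 1 _ \<epsilon>] eps_pos by simp
  then have "real k ^ 2 * \<epsilon> \<le> 1/4" and "\<epsilon> \<le> 1/4" using eps_small by linarith+
  then have small: "real (k * k) * \<epsilon>\<^sup>2 \<le> 1/16"
    using mult_mono[of "real k ^ 2 * \<epsilon>" "1/4" \<epsilon> "1/4"] eps_pos by (simp add: power2_eq_square mult_ac)
  have "rho ^ m \<le> rho ^ k"
    using assms rho_ge_one by (rule power_increasing)
  also have "\<dots> = (1 + \<epsilon>\<^sup>2) ^ (k * k)"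
    unfolding rho_def by (simp add: power_mult)
  also have "\<dots> \<le> 1 + real (k * k) * \<epsilon>\<^sup>2 + (real (k * k) * \<epsilon>\<^sup>2)\<^sup>2"
    using small by (intro one_plus_power_le) auto
  also have "\<dots> \<le> 2"
    using small mult_mono[OF small small] by (simp add: power2_eq_square)
  finally show ?thesis .
qed

lemma recursion_term_le:
  assumes fin: "finite R" and A: "A \<subseteq> R" and n: "2 \<le> l c0 + sum l A"
    and e: "e + 2 = l c0 + (\<Sum>c\<in>A. min (l c) 2) + (\<Sum>c\<in>R. l c - 2)"
    and IH: "colour_sum h N l (R - A) \<le> colour_bound l (R - A)"
  shows "real N * h (l c0 + sum l A) * colour_sum h N l (R - A)
         \<le> real (dfact (card {c\<in>R - A. l c = 1})) * rho ^ card (R - A) * \<epsilon> ^ e * s ^ (l c0 + sum l R)"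
proof -
  let ?n = "l c0 + sum l A"
  have split: "sum f R = sum f (R - A) + sum f A" for f :: "_ \<Rightarrow> nat"
    using sum.subset_diff[OF A fin] .
  have e_eq: "?n - 2 + (\<Sum>c\<in>R - A. l c - 2) = e"
    using e n sum_min_two_plus_excess[of l A] split[of "\<lambda>c. l c - 2"] by linarith
  have s_eq: "2 + (?n - 2) + sum l (R - A) = l c0 + sum l R"
    using n split[of l] by linarith
  have "real N * h ?n * colour_sum h N l (R - A) \<le> s\<^sup>2 * (\<epsilon> * s) ^ (?n - 2) * colour_bound l (R - A)"
    using IH h_le[OF n] eps_pos s_pos
    by (intro mult_mono) (auto simp: N_eq h_nonneg colour_sum_nonneg zero_le_mult_iff)
  also have "\<dots> = real (dfact (card {c\<in>R - A. l c = 1})) * rho ^ card (R - A)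
                 * (\<epsilon> ^ (?n - 2) * \<epsilon> ^ (\<Sum>c\<in>R - A. l c - 2)) * (s\<^sup>2 * s ^ (?n - 2) * s ^ sum l (R - A))"
    by (simp add: colour_bound_def power_mult_distrib mult_ac)
  also have "\<dots> = real (dfact (card {c\<in>R - A. l c = 1})) * rho ^ card (R - A) * \<epsilon> ^ e * s ^ (l c0 + sum l R)"
    by (simp only: power_add[symmetric] e_eq s_eq)
  finally show ?thesis .
qed

lemma recursion_term_singleton_le:
  assumes fin: "finite R" and c0: "c0 \<notin> R" "l c0 = 1" and pos: "\<forall>c\<in>R. 1 \<le> l c"
    and A: "A \<subseteq> R" "A \<noteq> {}" and IH: "colour_sum h N l (R - A) \<le> colour_bound l (R - A)"
  shows "real N * h (l c0 + sum l A) * colour_sum h N l (R - A)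
         \<le> rho ^ card (insert c0 R) * \<epsilon> ^ (\<Sum>c\<in>R. l c - 2) * s ^ Suc (sum l R) / \<epsilon>
           * (\<epsilon> ^ (\<Sum>c\<in>A. min (l c) 2) * real (dfact (card {c\<in>R - A. l c = 1})))"
proof -
  let ?W = "\<Sum>c\<in>A. min (l c) 2"
  have "0 < card A" using A fin by (auto simp: card_gt_0_iff intro: finite_subset)
  also have "card A = (\<Sum>c\<in>A. 1)" by simp
  also have "\<dots> \<le> ?W" using A pos by (intro sum_mono) auto
  finally have W: "1 \<le> ?W" by simp
  moreover have "?W \<le> sum l A" by (intro sum_mono) auto
  ultimately have "real N * h (l c0 + sum l A) * colour_sum h N l (R - A)
      \<le> real (dfact (card {c\<in>R - A. l c = 1})) * rho ^ card (R - A)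
        * \<epsilon> ^ (?W - 1 + (\<Sum>c\<in>R. l c - 2)) * s ^ (l c0 + sum l R)"
    using c0 by (intro recursion_term_le fin A IH) auto
  also have "\<dots> \<le> real (dfact (card {c\<in>R - A. l c = 1})) * rho ^ card (insert c0 R)
                   * \<epsilon> ^ (?W - 1 + (\<Sum>c\<in>R. l c - 2)) * s ^ (l c0 + sum l R)"
    using fin rho_ge_one eps_pos s_pos
    by (intro mult_right_mono mult_left_mono power_increasing card_mono) auto
  also have "\<dots> = rho ^ card (insert c0 R) * \<epsilon> ^ (\<Sum>c\<in>R. l c - 2) * s ^ Suc (sum l R) / \<epsilon>
                   * (\<epsilon> ^ ?W * real (dfact (card {c\<in>R - A. l c = 1})))"
    using W eps_pos c0 by (simp add: power_add power_diff field_simps)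
  finally show ?thesis .
qed

lemma colour_sum_insert_singleton_le:
  assumes fin: "finite R" and c0: "c0 \<notin> R" "l c0 = 1" and pos: "\<forall>c\<in>R. 1 \<le> l c" and card: "card R \<le> k"
    and IH: "\<And>A. A \<subseteq> R \<Longrightarrow> colour_sum h N l (R - A) \<le> colour_bound l (R - A)"
  shows "colour_sum h N l (insert c0 R) \<le> colour_bound l (insert c0 R)"
proof -
  define K where "K = rho ^ card (insert c0 R) * \<epsilon> ^ (\<Sum>c\<in>R. l c - 2) * s ^ Suc (sum l R)"
  have "colour_sum h N l (insert c0 R) \<le> real N * (\<Sum>A\<in>Pow R. h (l c0 + sum l A) * colour_sum h N l (R - A))"
    by (rule colour_sum_insert_le[where h=h, OF fin c0(1) h_0 h_nonneg])
  also have "\<dots> = (\<Sum>A\<in>Pow R - {{}}. real N * h (l c0 + sum l A) * colour_sum h N l (R - A))"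
    \<comment> \<open>a fixed point alone in its colour class contributes \<open>h 1 = 0\<close>\<close>
    using fin c0 h_1 by (simp add: sum_distrib_left sum.remove[of "Pow R" "{}"] mult.assoc)
  also have "\<dots> \<le> (\<Sum>A\<in>Pow R - {{}}. K / \<epsilon> * (\<epsilon> ^ (\<Sum>c\<in>A. min (l c) 2) * real (dfact (card {c\<in>R - A. l c = 1}))))"
    unfolding K_def using fin c0 pos IH by (intro sum_mono recursion_term_singleton_le) auto
  also have "\<dots> \<le> K / \<epsilon> * (\<epsilon> * real (dfact (Suc (card {c\<in>R. l c = 1}))))"
    unfolding sum_distrib_left[symmetric] using K_def rho_ge_one eps_pos s_pos
    by (intro mult_left_mono sum_Pow_weight_dfact_le[OF fin pos card eps_pos eps_small k_pos]) auto
  also have "\<dots> = colour_bound l (insert c0 R)"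
  proof -
    have "{c\<in>insert c0 R. l c = 1} = insert c0 {c\<in>R. l c = 1}" using c0 by auto
    then show ?thesis
      using fin c0 eps_pos unfolding K_def colour_bound_def by simp
  qed
  finally show ?thesis .
qed

lemma recursion_term_large_le:
  assumes fin: "finite R" and c0: "c0 \<notin> R" "2 \<le> l c0" and large: "\<forall>c\<in>R. 2 \<le> l c"
    and A: "A \<subseteq> R" and IH: "colour_sum h N l (R - A) \<le> colour_bound l (R - A)"
  shows "real N * h (l c0 + sum l A) * colour_sum h N l (R - A)
         \<le> rho ^ card R * \<epsilon> ^ (\<Sum>c\<in>insert c0 R. l c - 2) * s ^ sum l (insert c0 R) * (\<epsilon>\<^sup>2) ^ card A"
proof -
  define E where "E = (\<Sum>c\<in>insert c0 R. l c - 2)"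
  have W: "(\<Sum>c\<in>A. min (l c) 2) = 2 * card A"
    using A large by (simp add: min_absorb2 subset_iff)
  have no_singletons: "{c\<in>R - A. l c = 1} = {}" using large by force
  have "real N * h (l c0 + sum l A) * colour_sum h N l (R - A)
      \<le> real (dfact (card {c\<in>R - A. l c = 1})) * rho ^ card (R - A) * \<epsilon> ^ (E + 2 * card A) * s ^ (l c0 + sum l R)"
  proof (rule recursion_term_le[OF fin A _ _ IH])
    show "2 \<le> l c0 + sum l A" using c0 by simp
    show "E + 2 * card A + 2 = l c0 + (\<Sum>c\<in>A. min (l c) 2) + (\<Sum>c\<in>R. l c - 2)"
      using W c0 fin unfolding E_def by simp
  qed
  also have "\<dots> \<le> rho ^ card R * \<epsilon> ^ (E + 2 * card A) * s ^ sum l (insert c0 R)"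
    unfolding no_singletons using fin c0 rho_ge_one eps_pos s_pos
    by (auto intro!: mult_right_mono power_increasing card_mono)
  also have "\<dots> = rho ^ card R * \<epsilon> ^ E * s ^ sum l (insert c0 R) * (\<epsilon>\<^sup>2) ^ card A"
    unfolding power_add power_mult by (simp add: mult_ac)
  finally show ?thesis unfolding E_def .
qed

lemma colour_sum_insert_large_le:
  assumes fin: "finite R" and c0: "c0 \<notin> R" "2 \<le> l c0" and large: "\<forall>c\<in>R. 2 \<le> l c" and card: "card R \<le> k"
    and IH: "\<And>A. A \<subseteq> R \<Longrightarrow> colour_sum h N l (R - A) \<le> colour_bound l (R - A)"
  shows "colour_sum h N l (insert c0 R) \<le> colour_bound l (insert c0 R)"
proof -
  define K where "K = rho ^ card R * \<epsilon> ^ (\<Sum>c\<in>insert c0 R. l c - 2) * s ^ sum l (insert c0 R)"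
  have "colour_sum h N l (insert c0 R) \<le> real N * (\<Sum>A\<in>Pow R. h (l c0 + sum l A) * colour_sum h N l (R - A))"
    by (rule colour_sum_insert_le[where h=h, OF fin c0(1) h_0 h_nonneg])
  also have "\<dots> = (\<Sum>A\<in>Pow R. real N * h (l c0 + sum l A) * colour_sum h N l (R - A))"
    by (simp add: sum_distrib_left mult.assoc)
  also have "\<dots> \<le> (\<Sum>A\<in>Pow R. K * (\<epsilon>\<^sup>2) ^ card A)"
    unfolding K_def using fin c0 large IH by (intro sum_mono recursion_term_large_le) auto
  also have "\<dots> = K * (1 + \<epsilon>\<^sup>2) ^ card R"
    using sum_Pow_power_sum[OF fin, of "\<epsilon>\<^sup>2" "\<lambda>_. 1"] by (simp add: sum_distrib_left[symmetric] add.commute)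
  also have "\<dots> \<le> K * rho"
    unfolding rho_def using card eps_pos K_def rho_ge_one s_pos
    by (intro mult_left_mono power_increasing) auto
  also have "\<dots> = colour_bound l (insert c0 R)"
  proof -
    have "{c\<in>insert c0 R. l c = 1} = {}" using c0 large by force
    then show ?thesis using fin c0 unfolding K_def colour_bound_def by (simp only:) simp
  qed
  finally show ?thesis .
qed

lemma colour_sum_le:
  assumes "finite S" "\<forall>c\<in>S. 1 \<le> l c" "card S \<le> k"
  shows "colour_sum h N l S \<le> colour_bound l S"
  using assms
proof (induction S rule: finite_psubset_induct)
  case (psubset S)
  show ?case
  proof (cases "S = {}")
    case True
    then show ?thesis by (simp add: colour_sum_empty h_0 colour_bound_def)
  next
    case False
    then obtain c0 where c0: "c0 \<in> S" and choice: "l c0 = 1 \<or> (\<forall>c\<in>S. 2 \<le> l c)"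
      using psubset.prems(1) by (metis Suc_1 Suc_le_eq le_neq_implies_less ex_in_conv)
    define R where "R = S - {c0}"
    have S: "S = insert c0 R" "c0 \<notin> R" and fin: "finite R" and card: "card R \<le> k"
      using c0 psubset.hyps psubset.prems(2) unfolding R_def by (auto simp: card_Diff1_le intro: le_trans)
    have IH: "colour_sum h N l (R - A) \<le> colour_bound l (R - A)" if "A \<subseteq> R" for A
    proof -
      have "card (R - A) \<le> k" using card fin by (meson card_mono Diff_subset le_trans)
      then show ?thesis using psubset.prems c0 fin by (intro psubset.IH) (auto simp: R_def)
    qed
    from choice show ?thesis
      unfolding S(1)
      using colour_sum_insert_singleton_le[OF fin S(2) _ _ card IH]
        colour_sum_insert_large_le[OF fin S(2) _ _ card IH] psubset.prems(1) c0 S by auto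
  qed
qed

end

section \<open>Moments of standardised Bernoulli variables\<close>

definition ber_moment :: "real \<Rightarrow> nat \<Rightarrow> real" where
  "ber_moment \<alpha> n = \<alpha> * ((1 - \<alpha>) / wB \<alpha>) ^ n + (1 - \<alpha>) * (- \<alpha> / wB \<alpha>) ^ n"

lemma wB_pos: "0 < \<alpha> \<Longrightarrow> \<alpha> < 1 \<Longrightarrow> 0 < wB \<alpha>"
  unfolding wB_def by simp

lemma ber_moment_0: "ber_moment \<alpha> 0 = 1"
  unfolding ber_moment_def by simp

lemma ber_moment_1: "ber_moment \<alpha> 1 = 0"
  unfolding ber_moment_def by (simp add: field_simps)

lemma abs_ber_moment_le:
  assumes \<alpha>: "0 < \<alpha>" "\<alpha> < 1" and n: "2 \<le> n"
  shows "\<bar>ber_moment \<alpha> n\<bar> \<le> (1 / wB \<alpha>) ^ (n - 2)"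
proof -
  define w where "w = wB \<alpha>"
  have w: "0 < w" "w\<^sup>2 = \<alpha> * (1 - \<alpha>)" using wB_pos[OF \<alpha>] \<alpha> unfolding w_def wB_def by auto
  define x where "x = (1 - \<alpha>) / w"
  define y where "y = \<alpha> / w"
  have xy: "0 \<le> x" "x \<le> 1 / w" "0 \<le> y" "y \<le> 1 / w"
    unfolding x_def y_def using \<alpha> w by (auto simp: divide_right_mono)
  have "\<alpha> * x\<^sup>2 = 1 - \<alpha>" "(1 - \<alpha>) * y\<^sup>2 = \<alpha>"
    unfolding x_def y_def using w \<alpha> by (simp_all add: power_divide w(2)) (simp_all add: field_simps power2_eq_square)
  moreover have "n = 2 + (n - 2)" using n by simp
  then have "x ^ n = x\<^sup>2 * x ^ (n - 2)" "y ^ n = y\<^sup>2 * y ^ (n - 2)"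
    by (metis power_add)+
  ultimately have moments: "\<alpha> * x ^ n = (1 - \<alpha>) * x ^ (n - 2)" "(1 - \<alpha>) * y ^ n = \<alpha> * y ^ (n - 2)"
    by (simp_all add: mult.assoc[symmetric])
  have "\<bar>ber_moment \<alpha> n\<bar> \<le> \<alpha> * x ^ n + (1 - \<alpha>) * y ^ n"
    using \<alpha> xy wB_pos[OF \<alpha>] abs_triangle_ineq[of "\<alpha> * x ^ n" "(1 - \<alpha>) * (- y) ^ n"]
    unfolding ber_moment_def x_def y_def w_def by (simp add: abs_mult power_abs)
  also have "\<dots> \<le> (1 - \<alpha>) * (1 / w) ^ (n - 2) + \<alpha> * (1 / w) ^ (n - 2)"
    unfolding moments using \<alpha> xy by (intro add_mono mult_left_mono power_mono) auto
  finally show ?thesis unfolding w_def by (simp add: algebra_simps)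
qed

lemma expectation_ahat_power:
  assumes \<alpha>: "0 < \<alpha>" "\<alpha> < 1" and u: "u < N"
  shows "measure_pmf.expectation (ber_vec N \<alpha>) (\<lambda>a. ahat \<alpha> a u ^ n) = ber_moment \<alpha> n"
proof -
  have "map_pmf (\<lambda>a. a u) (ber_vec N \<alpha>) = bernoulli_pmf \<alpha>"
    unfolding ber_vec_def using u by (subst Pi_pmf_component) auto
  moreover have "measure_pmf.expectation (ber_vec N \<alpha>) (\<lambda>a. ahat \<alpha> a u ^ n)
      = measure_pmf.expectation (map_pmf (\<lambda>a. a u) (ber_vec N \<alpha>)) (\<lambda>b. ((of_bool b - \<alpha>) / wB \<alpha>) ^ n)"
    unfolding ahat_def by simp
  ultimately show ?thesis
    using \<alpha> unfolding ber_moment_def by (simp add: algebra_simps)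
qed

lemma expectation_prod_ahat:
  fixes i :: "nat \<Rightarrow> nat"
  assumes \<alpha>: "0 < \<alpha>" "\<alpha> < 1" and i: "i \<in> {..<k} \<rightarrow> {..<N}"
  shows "measure_pmf.expectation (ber_vec N \<alpha>) (\<lambda>a. \<Prod>j<k. ahat \<alpha> a (i j))
         = (\<Prod>u<N. ber_moment \<alpha> (card {j. j < k \<and> i j = u}))"
proof -
  let ?X = "\<lambda>u a. ahat \<alpha> a u ^ card {j. j < k \<and> i j = u}"
  have ind: "prob_space.indep_vars (measure_pmf (ber_vec N \<alpha>)) (\<lambda>_. borel) ?X {..<N}"
    using prob_space.indep_vars_compose2[OF prob_space_measure_pmf
        indep_vars_Pi_pmf[of "{..<N}" False "\<lambda>_. bernoulli_pmf \<alpha>", OF finite_lessThan],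
        of "\<lambda>u b. ((of_bool b - \<alpha>) / wB \<alpha>) ^ card {j. j < k \<and> i j = u}" "\<lambda>_. borel"]
    by (simp add: ber_vec_def ahat_def)
  have fin: "finite (set_pmf (ber_vec N \<alpha>))"
    unfolding ber_vec_def by (subst set_Pi_pmf) auto
  have "(\<Prod>j<k. ahat \<alpha> a (i j)) = (\<Prod>u<N. \<Prod>j\<in>{j \<in> {..<k}. i j = u}. ahat \<alpha> a (i j))" for a
    using i by (intro prod.group[symmetric]) auto
  then have "measure_pmf.expectation (ber_vec N \<alpha>) (\<lambda>a. \<Prod>j<k. ahat \<alpha> a (i j))
      = measure_pmf.expectation (ber_vec N \<alpha>) (\<lambda>a. \<Prod>u<N. ?X u a)"
    by (simp add: lessThan_def)
  also have "\<dots> = (\<Prod>u<N. measure_pmf.expectation (ber_vec N \<alpha>) (?X u))"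
    by (rule prob_space.indep_vars_lebesgue_integral[OF prob_space_measure_pmf finite_lessThan ind
          integrable_measure_pmf_finite[OF fin]])
  also have "\<dots> = (\<Prod>u<N. ber_moment \<alpha> (card {j. j < k \<and> i j = u}))"
    using expectation_ahat_power[OF \<alpha>] by (intro prod.cong) auto
  finally show ?thesis .
qed

section \<open>Cycles of a permutation\<close>

definition cycles_of :: "(nat \<Rightarrow> nat) \<Rightarrow> nat \<Rightarrow> nat set set" where
  "cycles_of \<sigma> k = {orbit \<sigma> x | x. x < k}"

definition lift_colouring :: "(nat \<Rightarrow> nat) \<Rightarrow> nat \<Rightarrow> (nat set \<Rightarrow> nat) \<Rightarrow> nat \<Rightarrow> nat" where
  "lift_colouring \<sigma> k g j = (if j < k then g (orbit \<sigma> j) else undefined)"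

lemma cyc_count_eq: "cyc_count k \<sigma> a = card {Q \<in> cycles_of \<sigma> k. card Q = a}"
  unfolding cyc_count_def cycles_of_def by (rule arg_cong[where f=card]) auto

lemma cyc_count_ge_eq: "cyc_count_ge k \<sigma> a = card {Q \<in> cycles_of \<sigma> k. a \<le> card Q}"
  unfolding cyc_count_ge_def cycles_of_def by (rule arg_cong[where f=card]) auto

context
  fixes \<sigma> :: "nat \<Rightarrow> nat" and k :: nat
  assumes perm: "\<sigma> permutes {..<k}"
begin

lemma permutation_sigma: "permutation \<sigma>"
  using perm by (auto simp: permutation_permutes)

lemma self_in_orbit: "x \<in> orbit \<sigma> x"
  using permutation_sigma by (rule permutation_self_in_orbit)

lemma orbit_eq_if_mem: "y \<in> orbit \<sigma> x \<Longrightarrow> orbit \<sigma> y = orbit \<sigma> x"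
  using permutation_sigma by (intro orbit_cyclic_eq3 cyclic_on_orbit')

lemma orbit_subset: "x < k \<Longrightarrow> orbit \<sigma> x \<subseteq> {..<k}"
  using permutes_orbit_subset[OF perm] by auto

lemma finite_cycles: "finite (cycles_of \<sigma> k)"
  unfolding cycles_of_def by simp

lemma cycle_subset: "Q \<in> cycles_of \<sigma> k \<Longrightarrow> Q \<subseteq> {..<k}"
  unfolding cycles_of_def using orbit_subset by auto

lemma card_cycle_ge_one: "Q \<in> cycles_of \<sigma> k \<Longrightarrow> 1 \<le> card Q"
  using cycle_subset[of Q] self_in_orbit unfolding cycles_of_def
  by (auto simp: Suc_le_eq card_gt_0_iff intro: finite_subset)

lemma Min_cycle:
  assumes "Q \<in> cycles_of \<sigma> k"
  shows "Min Q \<in> Q" "Min Q < k" "orbit \<sigma> (Min Q) = Q"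
proof -
  obtain x where x: "x < k" "Q = orbit \<sigma> x" using assms unfolding cycles_of_def by auto
  then have "finite Q" "Q \<noteq> {}" using orbit_subset self_in_orbit by (auto intro: finite_subset)
  then show "Min Q \<in> Q" by simp
  then show "Min Q < k" "orbit \<sigma> (Min Q) = Q" using x orbit_subset orbit_eq_if_mem by auto
qed

lemma card_preimage_lift_colouring:
  "card {j. j < k \<and> lift_colouring \<sigma> k g j = u} = load card (cycles_of \<sigma> k) g u"
proof -
  have "{j. j < k \<and> lift_colouring \<sigma> k g j = u} = \<Union>{Q \<in> cycles_of \<sigma> k. g Q = u}"
    unfolding lift_colouring_def cycles_of_def
    using self_in_orbit orbit_subset orbit_eq_if_mem by fastforce
  moreover have "card (\<Union>{Q \<in> cycles_of \<sigma> k. g Q = u}) = sum card {Q \<in> cycles_of \<sigma> k. g Q = u}"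
  proof (rule card_Union_disjoint)
    show "pairwise disjnt {Q \<in> cycles_of \<sigma> k. g Q = u}"
      unfolding pairwise_def disjnt_def cycles_of_def using orbit_eq_if_mem by blast
  qed (use cycle_subset in \<open>auto intro: finite_subset\<close>)
  ultimately show ?thesis
    unfolding load_def by simp
qed

lemma sum_card_cycles: "sum card (cycles_of \<sigma> k) = k"
proof -
  have "{j. j < k \<and> lift_colouring \<sigma> k (\<lambda>_. 0) j = 0} = {..<k}"
    by (auto simp: lift_colouring_def)
  then show ?thesis
    using card_preimage_lift_colouring[of "\<lambda>_. 0" 0] unfolding load_def by simp
qed

lemma card_cycles_le: "card (cycles_of \<sigma> k) \<le> k"
proof -
  have "card (cycles_of \<sigma> k) = (\<Sum>Q\<in>cycles_of \<sigma> k. 1)" by simp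
  also have "\<dots> \<le> sum card (cycles_of \<sigma> k)" by (intro sum_mono card_cycle_ge_one)
  finally show ?thesis by (simp add: sum_card_cycles)
qed

lemma compatible_const_on_orbit:
  assumes "\<forall>j<k. i (\<sigma> j) = i j" "x < k" "y \<in> orbit \<sigma> x"
  shows "i y = i x"
  using assms(3)
proof induction
  case (step y)
  then show ?case using assms(1) orbit_subset[OF assms(2)] by auto
qed (use assms in auto)

lemma bij_betw_lift_colouring:
  "bij_betw (lift_colouring \<sigma> k) (cycles_of \<sigma> k \<rightarrow>\<^sub>E {..<N})
     {i \<in> {..<k} \<rightarrow>\<^sub>E {..<N}. \<forall>j<k. i (\<sigma> j) = i j}"
proof (rule bij_betw_byWitness[where f'="\<lambda>i. restrict (\<lambda>Q. i (Min Q)) (cycles_of \<sigma> k)"])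
  have orbit_in_cycles: "orbit \<sigma> j \<in> cycles_of \<sigma> k" if "j < k" for j
    using that unfolding cycles_of_def by auto
  show "\<forall>g\<in>cycles_of \<sigma> k \<rightarrow>\<^sub>E {..<N}. restrict (\<lambda>Q. lift_colouring \<sigma> k g (Min Q)) (cycles_of \<sigma> k) = g"
    using Min_cycle by (auto simp: lift_colouring_def fun_eq_iff PiE_def extensional_def)
  show "\<forall>i\<in>{i \<in> {..<k} \<rightarrow>\<^sub>E {..<N}. \<forall>j<k. i (\<sigma> j) = i j}.
          lift_colouring \<sigma> k (restrict (\<lambda>Q. i (Min Q)) (cycles_of \<sigma> k)) = i"
  proof (intro ballI ext)
    fix i j assume i: "i \<in> {i \<in> {..<k} \<rightarrow>\<^sub>E {..<N}. \<forall>j<k. i (\<sigma> j) = i j}"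
    show "lift_colouring \<sigma> k (restrict (\<lambda>Q. i (Min Q)) (cycles_of \<sigma> k)) j = i j"
    proof (cases "j < k")
      case True
      then show ?thesis
        using i orbit_in_cycles[OF True] Min_cycle(1)[OF orbit_in_cycles[OF True]]
          compatible_const_on_orbit[of i j "Min (orbit \<sigma> j)"]
        by (simp add: lift_colouring_def)
    qed (use i in \<open>auto simp: lift_colouring_def PiE_def extensional_def\<close>)
  qed
  have "\<sigma> j < k" "orbit \<sigma> (\<sigma> j) = orbit \<sigma> j" if "j < k" for j
    using that permutes_in_image[OF perm, of j] permutation_orbit_step[OF permutation_sigma] by auto
  then show "lift_colouring \<sigma> k ` (cycles_of \<sigma> k \<rightarrow>\<^sub>E {..<N})
               \<subseteq> {i \<in> {..<k} \<rightarrow>\<^sub>E {..<N}. \<forall>j<k. i (\<sigma> j) = i j}"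
    using orbit_in_cycles by (auto simp: lift_colouring_def split: if_splits)
  show "(\<lambda>i. restrict (\<lambda>Q. i (Min Q)) (cycles_of \<sigma> k)) ` {i \<in> {..<k} \<rightarrow>\<^sub>E {..<N}. \<forall>j<k. i (\<sigma> j) = i j}
          \<subseteq> cycles_of \<sigma> k \<rightarrow>\<^sub>E {..<N}"
    using Min_cycle(2) by auto
qed

lemma f_alpha_le_colour_sum:
  assumes \<alpha>: "0 < \<alpha>" "\<alpha> < 1"
  shows "f_alpha N k \<alpha> \<sigma> \<le> colour_sum (\<lambda>n. \<bar>ber_moment \<alpha> n\<bar>) N card (cycles_of \<sigma> k)"
proof -
  let ?Comp = "{i \<in> {..<k} \<rightarrow>\<^sub>E {..<N}. \<forall>j<k. i (\<sigma> j) = i j}"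
  let ?m = "\<lambda>i u. ber_moment \<alpha> (card {j. j < k \<and> i j = u})"
  have "f_alpha N k \<alpha> \<sigma> = \<bar>\<Sum>i\<in>?Comp. \<Prod>u<N. ?m i u\<bar>"
    unfolding f_alpha_def using expectation_prod_ahat[OF \<alpha>] by (intro arg_cong[where f=abs] sum.cong) auto
  also have "\<dots> \<le> (\<Sum>i\<in>?Comp. \<Prod>u<N. \<bar>?m i u\<bar>)"
    by (rule order_trans[OF sum_abs]) (simp add: abs_prod)
  also have "\<dots> = (\<Sum>g\<in>cycles_of \<sigma> k \<rightarrow>\<^sub>E {..<N}. \<Prod>u<N. \<bar>?m (lift_colouring \<sigma> k g) u\<bar>)"
    by (rule sum.reindex_bij_betw[OF bij_betw_lift_colouring, symmetric])
  also have "\<dots> = colour_sum (\<lambda>n. \<bar>ber_moment \<alpha> n\<bar>) N card (cycles_of \<sigma> k)"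
    unfolding colour_sum_def card_preimage_lift_colouring ..
  finally show ?thesis .
qed

lemma sum_excess_cycles:
  "(\<Sum>a=3..k. (a - 2) * cyc_count k \<sigma> a) = (\<Sum>Q\<in>cycles_of \<sigma> k. card Q - 2)"
proof -
  let ?L = "{Q \<in> cycles_of \<sigma> k. 3 \<le> card Q}"
  have "card ` ?L \<subseteq> {3..k}"
    using cycle_subset card_mono[of "{..<k}"] by fastforce
  then have "(\<Sum>Q\<in>?L. card Q - 2) = (\<Sum>a=3..k. \<Sum>Q\<in>{Q \<in> ?L. card Q = a}. card Q - 2)"
    using finite_cycles by (intro sum.group[symmetric]) auto
  also have "\<dots> = (\<Sum>a=3..k. (a - 2) * cyc_count k \<sigma> a)"
  proof (intro sum.cong refl)
    fix a assume "a \<in> {3..k}"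
    then have "{Q \<in> ?L. card Q = a} = {Q \<in> cycles_of \<sigma> k. card Q = a}" by auto
    then show "(\<Sum>Q\<in>{Q \<in> ?L. card Q = a}. card Q - 2) = (a - 2) * cyc_count k \<sigma> a"
      by (simp add: cyc_count_eq)
  qed
  moreover have "(\<Sum>Q\<in>?L. card Q - 2) = (\<Sum>Q\<in>cycles_of \<sigma> k. card Q - 2)"
    using finite_cycles by (intro sum.mono_neutral_left) auto
  ultimately show ?thesis by simp
qed

lemma sum_min_two_cycles:
  "(\<Sum>Q\<in>cycles_of \<sigma> k. min (card Q) 2) = cyc_count k \<sigma> 1 + 2 * cyc_count_ge k \<sigma> 2"
proof -
  have "(\<Sum>Q\<in>cycles_of \<sigma> k. min (card Q) 2) = (\<Sum>Q\<in>cycles_of \<sigma> k. if card Q = 1 then 1 else 2)"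
  proof (intro sum.cong refl)
    fix Q assume "Q \<in> cycles_of \<sigma> k"
    then have "1 \<le> card Q" by (rule card_cycle_ge_one)
    then show "min (card Q) 2 = (if card Q = 1 then 1 else 2)" by auto
  qed
  also have "\<dots> = card (cycles_of \<sigma> k \<inter> {Q. card Q = 1}) + 2 * card (cycles_of \<sigma> k \<inter> - {Q. card Q = 1})"
    using finite_cycles by (simp add: sum.If_cases)
  also have "cycles_of \<sigma> k \<inter> - {Q. card Q = 1} = {Q \<in> cycles_of \<sigma> k. 2 \<le> card Q}"
    using card_cycle_ge_one by force
  finally show ?thesis
    unfolding cyc_count_eq cyc_count_ge_eq by (simp add: Int_def conj_commute)
qed

end

lemma sqrt_power_eq_powr: "0 < x \<Longrightarrow> sqrt x ^ n = x powr (real n / 2)"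
  by (simp add: powr_half_sqrt_powr powr_realpow real_sqrt_power)

lemma moment_bound_ber_moment:
  assumes \<alpha>: "0 < \<alpha>" "\<alpha> < 1" and k: "1 \<le> k" and N: "16 * real k ^ 4 / (wB \<alpha>)\<^sup>2 \<le> real N"
  shows "moment_bound (\<lambda>n. \<bar>ber_moment \<alpha> n\<bar>) N k (1 / (wB \<alpha> * sqrt (real N))) (sqrt (real N))"
proof -
  define w where "w = wB \<alpha>"
  define s where "s = sqrt (real N)"
  have w: "0 < w" using wB_pos[OF \<alpha>] by (simp add: w_def)
  have bound: "(4 * real k ^ 2)\<^sup>2 \<le> w\<^sup>2 * real N"
    using N w k unfolding w_def by (simp add: pos_divide_le_eq power2_eq_square power4_eq_xxxx mult_ac)
  moreover have "0 < (4 * real k ^ 2)\<^sup>2" using k by simp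
  ultimately have "0 < w\<^sup>2 * real N" by linarith
  then have s: "0 < s" "real N = s\<^sup>2" unfolding s_def using w by (auto simp: zero_less_mult_iff)
  have "(4 * real k ^ 2)\<^sup>2 \<le> (w * s)\<^sup>2"
    using bound s(2) by (simp only: power_mult_distrib)
  then have "4 * real k ^ 2 \<le> w * s"
    by (rule power2_le_imp_le) (use w s in simp)
  then show ?thesis
    unfolding w_def[symmetric] s_def[symmetric]
  proof unfold_locales
    show "\<bar>ber_moment \<alpha> n\<bar> \<le> (1 / (w * s) * s) ^ (n - 2)" if "2 \<le> n" for n
      using abs_ber_moment_le[OF \<alpha> that] s w unfolding w_def by simp
  qed (use s w k in \<open>auto simp: field_simps ber_moment_0 ber_moment_1[unfolded One_nat_def]\<close>)
qed

lemma f_alpha_le: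
  assumes \<alpha>: "0 < \<alpha>" "\<alpha> < 1" and k: "1 \<le> k" and N: "16 * real k ^ 4 / (wB \<alpha>)\<^sup>2 \<le> real N"
    and perm: "\<sigma> permutes {..<k}"
  shows "f_alpha N k \<alpha> \<sigma> \<le> 2 * inverse (wB \<alpha> ^ (\<Sum>a=3..k. (a - 2) * cyc_count k \<sigma> a))
           * real (dfact (cyc_count k \<sigma> 1))
           * real N powr (real (cyc_count k \<sigma> 1) / 2 + real (cyc_count_ge k \<sigma> 2))"
proof -
  define w where "w = wB \<alpha>"
  define s where "s = sqrt (real N)"
  define \<epsilon> where "\<epsilon> = 1 / (w * s)"
  interpret moment_bound "\<lambda>n. \<bar>ber_moment \<alpha> n\<bar>" N k \<epsilon> s
    unfolding \<epsilon>_def w_def s_def by (rule moment_bound_ber_moment[OF \<alpha> k N])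
  have w: "0 < w" using wB_pos[OF \<alpha>] by (simp add: w_def)
  have N_pos: "0 < real N" using s_pos N_eq by simp
  have eps_s: "\<epsilon> * s = 1 / w" using s_pos unfolding \<epsilon>_def by simp
  let ?C = "cycles_of \<sigma> k"
  define c1 where "c1 = cyc_count k \<sigma> 1"
  define E where "E = (\<Sum>Q\<in>?C. card Q - 2)"
  define W where "W = (\<Sum>Q\<in>?C. min (card Q) 2)"
  have "f_alpha N k \<alpha> \<sigma> \<le> colour_sum (\<lambda>n. \<bar>ber_moment \<alpha> n\<bar>) N card ?C"
    by (rule f_alpha_le_colour_sum[OF perm \<alpha>])
  also have "\<dots> \<le> colour_bound card ?C"
    using card_cycle_ge_one[OF perm] by (intro colour_sum_le finite_cycles[OF perm] card_cycles_le[OF perm]) auto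
  also have "\<dots> = real (dfact c1) * rho ^ card ?C * ((\<epsilon> * s) ^ E * s ^ W)"
  proof -
    have "sum card ?C = E + W"
      using sum_min_two_plus_excess[of card ?C] unfolding E_def W_def by simp
    then show ?thesis
      unfolding colour_bound_def c1_def cyc_count_eq E_def[symmetric]
      by (simp add: power_add power_mult_distrib mult_ac)
  qed
  also have "\<dots> \<le> real (dfact c1) * 2 * ((\<epsilon> * s) ^ E * s ^ W)"
    using rho_power_le_two[OF card_cycles_le[OF perm]] s_pos eps_pos
    by (intro mult_right_mono mult_left_mono) auto
  also have "(\<epsilon> * s) ^ E * s ^ W = inverse (w ^ E) * real N powr (real c1 / 2 + real (cyc_count_ge k \<sigma> 2))"
    using w N_pos sqrt_power_eq_powr[of "real N" W] sum_min_two_cycles[OF perm]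
    unfolding eps_s unfolding W_def c1_def s_def by (simp add: power_one_over add_divide_distrib inverse_eq_divide)
  finally show ?thesis
    unfolding sum_excess_cycles[OF perm] c1_def E_def w_def by (simp add: mult_ac)
qed

theorem lemma5p10:
  shows "\<exists>C>0. \<forall>(\<alpha>::real) (N::nat) (k::nat) (\<sigma>::nat \<Rightarrow> nat).
    0 < \<alpha> \<and> \<alpha> < 1 \<and> k \<ge> 1 \<and> real N \<ge> 16 * real k ^ 4 / (wB \<alpha>)\<^sup>2 \<and> \<sigma> permutes {..<k} \<longrightarrow>
    f_alpha N k \<alpha> \<sigma> \<le>
      C * real k * exp (real k powr (3/4))
      * inverse (wB \<alpha> ^ (\<Sum>a=3..k. (a - 2) * cyc_count k \<sigma> a))
      * real (dfact (cyc_count k \<sigma> 1))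
      * real N powr (real (cyc_count k \<sigma> 1) / 2 + real (cyc_count_ge k \<sigma> 2))"
proof (intro exI[of _ 2] conjI allI impI)
  fix \<alpha> :: real and N k :: nat and \<sigma> :: "nat \<Rightarrow> nat"
  assume H: "0 < \<alpha> \<and> \<alpha> < 1 \<and> k \<ge> 1 \<and> real N \<ge> 16 * real k ^ 4 / (wB \<alpha>)\<^sup>2 \<and> \<sigma> permutes {..<k}"
  let ?B = "inverse (wB \<alpha> ^ (\<Sum>a=3..k. (a - 2) * cyc_count k \<sigma> a)) * real (dfact (cyc_count k \<sigma> 1))
            * real N powr (real (cyc_count k \<sigma> 1) / 2 + real (cyc_count_ge k \<sigma> 2))"
  have "0 \<le> ?B" using wB_pos[of \<alpha>] H by simp
  moreover have "1 * 1 \<le> real k * exp (real k powr (3/4))" using H by (intro mult_mono) auto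
  ultimately have "2 * ?B \<le> 2 * real k * exp (real k powr (3/4)) * ?B"
    using mult_right_mono[of 1 "real k * exp (real k powr (3/4))" "2 * ?B"] by (simp add: mult_ac)
  then show "f_alpha N k \<alpha> \<sigma> \<le> 2 * real k * exp (real k powr (3/4))
      * inverse (wB \<alpha> ^ (\<Sum>a=3..k. (a - 2) * cyc_count k \<sigma> a))
      * real (dfact (cyc_count k \<sigma> 1))
      * real N powr (real (cyc_count k \<sigma> 1) / 2 + real (cyc_count_ge k \<sigma> 2))"
    using f_alpha_le[of \<alpha> k N \<sigma>] H by (simp add: mult_ac)
qed simp

end
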